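(* Let $X$ be a complete metric space, let $f:X\to\mathbb{R}\cup\{+\infty\}$ be a lower semicontinuous function, let $r_0>0$, $k>0$, and let $\varphi\in\mathcal{K}(0,r_0)$. The following assertions are equivalent: (i) the multivalued mapping $X\rightrightarrows\mathbb{R}$, $x\mapsto[(\varphi\circ f)(x),+\infty)$, is $k$-metrically regular on $[0<f<r_0]\times(0,\varphi(r_0))$; (ii) for all $r_1,r_2\in(0,r_0)$, $\operatorname{Dist}([f\le r_1],[f\le r_2])\le k\,|\varphi(r_1)-\varphi(r_2)|$; (iii) for all $x\in[0<f<r_0]$, $|\nabla(\varphi\circ f)|(x)\ge\frac1k$.
   Context: $\mathcal{K}(0,r_0)$ is the set of functions $\varphi\in C([0,r_0))\cap C^1(0,r_0)$ with $\varphi(0)=0$ and $\varphi'(r)>0$ for all $r\in(0,r_0)$; $\varphi(r_0)$ denotes $\lim_{r\uparrow r_0}\varphi(r)\in(0,+\infty]$. Notation: $[r_1<f<r_2]=\{x:r_1<f(x)<r_2\}$, $[f\le r]=\{x:f(x)\le r\}$. $\operatorname{dist}(x,S)=\inf_{y\in S}d(x,y)$; the Hausdorff distance is $\operatorname{Dist}(S_1,S_2)=\max\{\sup_{x\in S_1}\operatorname{dist}(x,S_2),\sup_{x\in S_2}\operatorname{dist}(x,S_1)\}$ (possibly $+\infty$). A multivalued map $F:X\rightrightarrows Y$ is $k$-metrically regular at $(\bar x,\bar y)\in\operatorname{Graph}F$ if there exist $\varepsilon,\delta>0$ with $\operatorname{dist}(x,F^{-1}(y))\le k\operatorname{dist}(y,F(x))$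 for all $(x,y)\in B(\bar x,\varepsilon)\times B(\bar y,\delta)$, where $F^{-1}(y)=\{x:y\in F(x)\}$; it is $k$-metrically regular on $V$ if it is so at every point of $\operatorname{Graph}F\cap V$. Strong slope: $|\nabla g|(x)=\limsup_{y\to x}\frac{(g(x)-g(y))^+}{d(x,y)}$, $a^+=\max\{a,0\}$. *)

theory Defs
  imports "HOL-Analysis.Analysis"
begin

definition lsc :: "('a::topological_space \<Rightarrow> ereal) \<Rightarrow> bool" where
  "lsc f \<longleftrightarrow> (\<forall>x. \<forall>c. c < f x \<longrightarrow> eventually (\<lambda>y. c < f y) (nhds x))"

definition classK :: "real \<Rightarrow> (real \<Rightarrow> real) \<Rightarrow> bool" where
  "classK r0 \<phi> \<longleftrightarrow> continuous_on {0..<r0} \<phi> \<and> \<phi> 0 = 0 \<and>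
     (\<exists>\<phi>'. (\<forall>r\<in>{0<..<r0}. (\<phi> has_real_derivative \<phi>' r) (at r) \<and> \<phi>' r > 0)
           \<and> continuous_on {0<..<r0} \<phi>')"

text \<open>phi(r0) = limit of phi(r) as r tends to r0 from the left, in (0, +infinity].\<close>
definition phi_lim :: "real \<Rightarrow> (real \<Rightarrow> real) \<Rightarrow> ereal" where
  "phi_lim r0 \<phi> = Lim (at_left r0) (\<lambda>r. ereal (\<phi> r))"

definition phi_comp :: "real \<Rightarrow> (real \<Rightarrow> real) \<Rightarrow> ('a \<Rightarrow> ereal) \<Rightarrow> 'a \<Rightarrow> ereal" where
  "phi_comp r0 \<phi> f x =
     (if f x \<le> 0 then ereal (\<phi> 0)
      else if f x < ereal r0 then ereal (\<phi> (real_of_ereal (f x)))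
      else phi_lim r0 \<phi>)"

text \<open>Distance from a point to a set, with dist(x, empty) = +infinity.\<close>
definition edist :: "'a::metric_space \<Rightarrow> 'a set \<Rightarrow> ereal" where
  "edist x S = (INF y\<in>S. ereal (dist x y))"

definition hDist :: "'a::metric_space set \<Rightarrow> 'a set \<Rightarrow> ereal" where
  "hDist S1 S2 = max (SUP x\<in>S1. edist x S2) (SUP x\<in>S2. edist x S1)"

definition graph :: "('a \<Rightarrow> 'b set) \<Rightarrow> ('a \<times> 'b) set" where
  "graph F = {(x, y). y \<in> F x}"

definition inv_map :: "('a \<Rightarrow> 'b set) \<Rightarrow> 'b \<Rightarrow> 'a set" where
  "inv_map F y = {x. y \<in> F x}"

definition metric_regular_at ::
  "real \<Rightarrow> ('a::metric_space \<Rightarrow> 'b::metric_space set) \<Rightarrow> 'a \<Rightarrow> 'b \<Rightarrow> bool" where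
  "metric_regular_at k F xb yb \<longleftrightarrow> (xb, yb) \<in> graph F \<and>
     (\<exists>\<epsilon>>0. \<exists>\<delta>>0. \<forall>x\<in>ball xb \<epsilon>. \<forall>y\<in>ball yb \<delta>.
        edist x (inv_map F y) \<le> ereal k * edist y (F x))"

definition metric_regular_on ::
  "real \<Rightarrow> ('a::metric_space \<Rightarrow> 'b::metric_space set) \<Rightarrow> ('a \<times> 'b) set \<Rightarrow> bool" where
  "metric_regular_on k F V \<longleftrightarrow> (\<forall>(xb, yb)\<in>graph F \<inter> V. metric_regular_at k F xb yb)"

definition strong_slope :: "('a::metric_space \<Rightarrow> ereal) \<Rightarrow> 'a \<Rightarrow> ereal" where
  "strong_slope g x = Limsup (at x) (\<lambda>y. max 0 (g x - g y) / ereal (dist x y))"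

end

theory Submission
  imports Defs
begin

text \<open>Write g for \<phi> \<circ> f, with \<phi> extended by 0 below 0 and by \<phi>(r0) from r0 on. Since \<phi> is
  strictly increasing and maps (0, r0) onto (0, \<phi>(r0)), the sublevel set [f \<le> r] is [g \<le> \<phi> r],
  and all three assertions are the corresponding assertions for g with \<phi> the identity.

  For g, both metric regularity of x \<mapsto> [g x, +\<infinity>) and the Lipschitz bound on the sublevel sets
  give the error bound dist(x, [g \<le> a]) \<le> k (g x - a) for levels a just below g x; by definition of
  the strong slope this forces |\<nabla>g|(x) \<ge> 1/k. Conversely, if |\<nabla>g| \<ge> 1/k on the band and x were
  at distance R > k (g x - a) from [g \<le> a], Ekeland's variational principle with constant
  (g x - a)/R < 1/k would produce a point above level a, within distance R of x, at which the slope
  is at most (g x - a)/R. The remaining implication, from the sublevel bound back to metric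
  regularity, is a direct estimate.\<close>

lemma edist_le_dist: "y \<in> S \<Longrightarrow> edist x S \<le> ereal (dist x y)"
  unfolding edist_def by (rule INF_lower)

lemma edist_nonneg: "0 \<le> edist x S"
  unfolding edist_def by (rule INF_greatest) simp

lemma edist_eq_0: "x \<in> S \<Longrightarrow> edist x S = 0"
  using edist_le_dist[of x S x] edist_nonneg[of x S] by (simp add: zero_ereal_def[symmetric])

lemma edist_empty: "edist x {} = \<infinity>"
  by (simp add: edist_def top_ereal_def)

lemma edist_less_ereal_iff: "edist x S < ereal r \<longleftrightarrow> (\<exists>y\<in>S. dist x y < r)"
  unfolding edist_def by (auto simp: INF_less_iff)

lemma edist_triangle: "edist x S \<le> ereal (dist x z) + edist z S"
proof (cases "S = {}")
  case True
  then show ?thesis by (simp add: edist_empty)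
next
  case False
  have "edist x S \<le> (INF y\<in>S. ereal (dist z y) + ereal (dist x z))"
    unfolding edist_def
  proof (rule INF_mono)
    fix y assume "y \<in> S"
    then show "\<exists>m\<in>S. ereal (dist x m) \<le> ereal (dist z y) + ereal (dist x z)"
      using dist_triangle[of x y z] by (intro bexI[of _ y]) (auto simp: dist_commute)
  qed
  also have "\<dots> = edist z S + ereal (dist x z)"
    unfolding edist_def by (rule INF_ereal_add_left) (use False in auto)
  finally show ?thesis
    by (simp add: add.commute)
qed

lemma edist_le_hDist: "x \<in> B \<Longrightarrow> edist x A \<le> hDist A B"
  unfolding hDist_def by (rule max.coboundedI2) (rule SUP_upper)

lemma hDist_commute: "hDist A B = hDist B A"
  unfolding hDist_def by (rule max.commute)

lemma hDist_le:
  assumes "\<And>x. x \<in> A \<Longrightarrow> edist x B \<le> r" and "\<And>x. x \<in> B \<Longrightarrow> edist x A \<le> r"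
  shows "hDist A B \<le> r"
  unfolding hDist_def using assms by (auto intro: SUP_least)

lemma lsc_const: "lsc (\<lambda>x. c)"
  by (simp add: lsc_def)

lemma lsc_max:
  assumes "lsc f" "lsc g"
  shows "lsc (\<lambda>x. max (f x) (g x))"
  unfolding lsc_def
proof (intro allI impI)
  fix x c assume "c < max (f x) (g x)"
  then consider "c < f x" | "c < g x"
    by (auto simp: less_max_iff_disj)
  then show "eventually (\<lambda>y. c < max (f y) (g y)) (nhds x)"
  proof cases
    case 1
    with assms(1) have "eventually (\<lambda>y. c < f y) (nhds x)"
      by (simp add: lsc_def)
    then show ?thesis
      by eventually_elim (simp add: less_max_iff_disj)
  next
    case 2
    with assms(2) have "eventually (\<lambda>y. c < g y) (nhds x)"
      by (simp add: lsc_def)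
    then show ?thesis
      by eventually_elim (simp add: less_max_iff_disj)
  qed
qed

lemma lsc_min:
  assumes "lsc f" "lsc g"
  shows "lsc (\<lambda>x. min (f x) (g x))"
  unfolding lsc_def
proof (intro allI impI)
  fix x c assume "c < min (f x) (g x)"
  then have "eventually (\<lambda>y. c < f y) (nhds x)" "eventually (\<lambda>y. c < g y) (nhds x)"
    using assms unfolding lsc_def by simp_all
  then show "eventually (\<lambda>y. c < min (f y) (g y)) (nhds x)"
    by eventually_elim simp
qed

lemma lsc_ereal_iff:
  "lsc (\<lambda>x. ereal (h x)) \<longleftrightarrow> (\<forall>x c. c < h x \<longrightarrow> eventually (\<lambda>y. c < h y) (nhds x))"
proof
  assume lsc: "lsc (\<lambda>x. ereal (h x))"
  show "\<forall>x c. c < h x \<longrightarrow> eventually (\<lambda>y. c < h y) (nhds x)"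
  proof (intro allI impI)
    fix x c assume "c < h x"
    then have "ereal c < ereal (h x)"
      by simp
    then show "eventually (\<lambda>y. c < h y) (nhds x)"
      using lsc unfolding lsc_def by (metis (mono_tags) eventually_mono less_ereal.simps(1))
  qed
next
  assume real: "\<forall>x c. c < h x \<longrightarrow> eventually (\<lambda>y. c < h y) (nhds x)"
  show "lsc (\<lambda>x. ereal (h x))"
    unfolding lsc_def
  proof (intro allI impI)
    fix x and c :: ereal
    assume "c < ereal (h x)"
    then show "eventually (\<lambda>y. c < ereal (h y)) (nhds x)"
      using real by (cases c) auto
  qed
qed

lemma lsc_add_continuous:
  assumes "lsc (\<lambda>x. ereal (h x))" and "continuous_on UNIV q"
  shows "lsc (\<lambda>x. ereal (h x + q x))"
  unfolding lsc_ereal_iff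
proof (intro allI impI)
  fix x c assume "c < h x + q x"
  define e where "e = (h x + q x - c) / 2"
  have "e > 0"
    using \<open>c < h x + q x\<close> by (simp add: e_def)
  have ce: "c = (h x - e) + (q x - e)"
    by (simp add: e_def)
  have "eventually (\<lambda>y. h x - e < h y) (nhds x)"
    using assms(1) \<open>e > 0\<close> unfolding lsc_ereal_iff by simp
  moreover have "eventually (\<lambda>y. q x - e < q y) (nhds x)"
  proof -
    have "open {y. q x - e < q y}"
      by (intro open_Collect_less continuous_on_const assms(2))
    then show ?thesis
      using eventually_nhds_in_open[of "{y. q x - e < q y}" x] \<open>e > 0\<close> by simp
  qed
  ultimately have "eventually (\<lambda>y. h x - e < h y \<and> q x - e < q y) (nhds x)"
    by (rule eventually_conj)
  then show "eventually (\<lambda>y. c < h y + q y) (nhds x)"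
    by (rule eventually_mono) (use ce in linarith)
qed

lemma closed_sublevel_lsc:
  assumes "lsc f"
  shows "closed {x. f x \<le> c}"
proof -
  have "open {x. c < f x}"
  proof (subst open_subopen, intro ballI)
    fix x assume "x \<in> {x. c < f x}"
    then have "eventually (\<lambda>y. c < f y) (nhds x)"
      using assms unfolding lsc_def by blast
    then obtain T where "open T" "x \<in> T" "\<forall>y\<in>T. c < f y"
      unfolding eventually_nhds by blast
    then show "\<exists>T. open T \<and> x \<in> T \<and> T \<subseteq> {x. c < f x}"
      by blast
  qed
  moreover have "{x. f x \<le> c} = - {x. c < f x}"
    by auto
  ultimately show ?thesis
    by (simp only: closed_Compl)
qed

section \<open>Ekeland's variational principle\<close>

definition ekeland_set :: "('a::metric_space \<Rightarrow> real) \<Rightarrow> real \<Rightarrow> 'a \<Rightarrow> 'a set" where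
  "ekeland_set h \<alpha> x = {y. h y + \<alpha> * dist y x \<le> h x}"

lemma ekeland_set_self: "x \<in> ekeland_set h \<alpha> x"
  by (simp add: ekeland_set_def)

lemma ekeland_set_subset:
  assumes "\<alpha> \<ge> 0" and "y \<in> ekeland_set h \<alpha> x"
  shows "ekeland_set h \<alpha> y \<subseteq> ekeland_set h \<alpha> x"
proof
  fix w assume "w \<in> ekeland_set h \<alpha> y"
  have "\<alpha> * dist w x \<le> \<alpha> * dist w y + \<alpha> * dist y x"
    using assms(1) dist_triangle[of w x y] by (simp add: distrib_left[symmetric] mult_left_mono)
  with \<open>w \<in> ekeland_set h \<alpha> y\<close> assms(2) show "w \<in> ekeland_set h \<alpha> x"
    by (simp add: ekeland_set_def)
qed

lemma closed_ekeland_set: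
  assumes "lsc (\<lambda>x. ereal (h x))"
  shows "closed (ekeland_set h \<alpha> x)"
proof -
  have "lsc (\<lambda>y. ereal (h y + \<alpha> * dist y x))"
    by (intro lsc_add_continuous assms continuous_intros)
  from closed_sublevel_lsc[OF this, of "ereal (h x)"] show ?thesis
    by (simp add: ekeland_set_def)
qed

lemma ekeland_set_nearly_minimal:
  assumes "e > 0"
  shows "\<exists>y\<in>ekeland_set h \<alpha> x. h y \<le> Inf (h ` ekeland_set h \<alpha> x) + e"
proof -
  have "h ` ekeland_set h \<alpha> x \<noteq> {}"
    using ekeland_set_self by blast
  then obtain y where "y \<in> ekeland_set h \<alpha> x" "h y < Inf (h ` ekeland_set h \<alpha> x) + e"
    using cInf_lessD[of "h ` ekeland_set h \<alpha> x" "Inf (h ` ekeland_set h \<alpha> x) + e"] assms by auto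
  then show ?thesis
    by force
qed

lemma ekeland_set_dist_le:
  assumes "bdd_below (range h)" and "\<alpha> \<ge> 0"
    and y: "y \<in> ekeland_set h \<alpha> x" "h y \<le> Inf (h ` ekeland_set h \<alpha> x) + e"
    and "u \<in> ekeland_set h \<alpha> y" "w \<in> ekeland_set h \<alpha> y"
  shows "\<alpha> * dist u w \<le> 2 * e"
proof -
  have to_y: "\<alpha> * dist v y \<le> e" if v: "v \<in> ekeland_set h \<alpha> y" for v
  proof -
    have "v \<in> ekeland_set h \<alpha> x"
      using ekeland_set_subset[OF assms(2) y(1)] v by blast
    then have "Inf (h ` ekeland_set h \<alpha> x) \<le> h v"
      by (intro cInf_lower bdd_below_mono[OF assms(1)]) auto
    with y(2) v show ?thesis
      by (simp add: ekeland_set_def)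
  qed
  have "\<alpha> * dist u w \<le> \<alpha> * dist u y + \<alpha> * dist w y"
    using assms(2) dist_triangle3[of u w y]
    by (simp add: distrib_left[symmetric] mult_left_mono dist_commute)
  with to_y[OF assms(5)] to_y[OF assms(6)] show ?thesis
    by linarith
qed

lemma ekeland_sequence:
  obtains X where "X 0 = x0" and "\<And>n. X (Suc n) \<in> ekeland_set h \<alpha> (X n)"
    and "\<And>n. h (X (Suc n)) \<le> Inf (h ` ekeland_set h \<alpha> (X n)) + (1/2)^n"
proof -
  have "\<exists>X. \<forall>n. (n = 0 \<longrightarrow> X n = x0) \<and>
      X (Suc n) \<in> ekeland_set h \<alpha> (X n) \<and> h (X (Suc n)) \<le> Inf (h ` ekeland_set h \<alpha> (X n)) + (1/2)^n"
  proof (rule dependent_nat_choice[where P="\<lambda>n x. n = 0 \<longrightarrow> x = x0"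
        and Q="\<lambda>n x y. y \<in> ekeland_set h \<alpha> x \<and> h y \<le> Inf (h ` ekeland_set h \<alpha> x) + (1/2)^n"])
    fix x n
    show "\<exists>y. (Suc n = 0 \<longrightarrow> y = x0) \<and>
        y \<in> ekeland_set h \<alpha> x \<and> h y \<le> Inf (h ` ekeland_set h \<alpha> x) + (1/2)^n"
      using ekeland_set_nearly_minimal[of "(1/2)^n" h \<alpha> x] by auto
  qed blast
  with that show thesis
    by blast
qed

lemma ekeland_variational_principle:
  fixes h :: "'a::complete_space \<Rightarrow> real"
  assumes lsc: "lsc (\<lambda>x. ereal (h x))" and bdd: "bdd_below (range h)" and \<alpha>: "\<alpha> > 0"
  obtains z where "h z + \<alpha> * dist z x0 \<le> h x0" and "\<And>y. y \<noteq> z \<Longrightarrow> h z < h y + \<alpha> * dist y z"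
proof -
  obtain X where X0: "X 0 = x0" and X_in: "\<And>n. X (Suc n) \<in> ekeland_set h \<alpha> (X n)"
    and X_inf: "\<And>n. h (X (Suc n)) \<le> Inf (h ` ekeland_set h \<alpha> (X n)) + (1/2)^n"
    using ekeland_sequence[of x0 h \<alpha>] by blast
  define T where "T n = ekeland_set h \<alpha> (X n)" for n
  have T_decr: "T n \<subseteq> T m" if "m \<le> n" for m n
  proof (rule lift_Suc_antimono_le[of T, OF _ that])
    show "T (Suc k) \<subseteq> T k" for k
      using ekeland_set_subset[OF _ X_in] \<alpha> by (simp add: T_def)
  qed
  have T_diam: "\<exists>n. \<forall>x\<in>T n. \<forall>y\<in>T n. dist x y < e" if "e > 0" for e
  proof -
    obtain N where N: "(1/2::real)^N < \<alpha> * e / 2"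
      using real_arch_pow_inv[of "\<alpha> * e / 2" "1/2"] \<alpha> \<open>e > 0\<close> by auto
    have "\<alpha> * dist x y < \<alpha> * e" if "x \<in> T (Suc N)" "y \<in> T (Suc N)" for x y
      using ekeland_set_dist_le[OF bdd _ X_in[of N] X_inf[of N] that[unfolded T_def]] \<alpha> N by linarith
    then show ?thesis
      using \<alpha> by auto
  qed
  have "\<exists>z. \<Inter>(range T) = {z}"
  proof (rule decreasing_closed_nest_sing)
    show "closed (T n)" "T n \<noteq> {}" for n
      using closed_ekeland_set[OF lsc] ekeland_set_self[of "X n" h \<alpha>] by (auto simp: T_def)
  qed (use T_decr T_diam in auto)
  then obtain z where z: "\<Inter>(range T) = {z}"
    by blast
  show thesis
  proof
    show "h z + \<alpha> * dist z x0 \<le> h x0"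
      using z X0 by (auto simp: T_def ekeland_set_def)
  next
    fix y assume "y \<noteq> z"
    show "h z < h y + \<alpha> * dist y z"
    proof (rule ccontr)
      assume "\<not> ?thesis"
      then have "y \<in> ekeland_set h \<alpha> z"
        by (simp add: ekeland_set_def)
      moreover have "z \<in> T n" for n
        using z by blast
      ultimately have "y \<in> T n" for n
        using ekeland_set_subset[of \<alpha> z h "X n"] \<alpha> by (auto simp: T_def)
      then have "y \<in> \<Inter>(range T)"
        by blast
      with z \<open>y \<noteq> z\<close> show False
        by blast
    qed
  qed
qed

lemma ekeland_variational_principle_ereal:
  fixes g :: "'a::complete_space \<Rightarrow> ereal"
  assumes lsc: "lsc g" and bdd: "\<And>x. ereal a \<le> g x" and gx0: "g x0 = ereal c" and "\<alpha> > 0"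
  obtains z where "g z + ereal (\<alpha> * dist z x0) \<le> ereal c"
    and "\<And>y. g z \<le> g y + ereal (\<alpha> * dist y z)"
proof -
  \<comment> \<open>cutting g off above c + 1 makes it real valued without changing its values near the minimiser\<close>
  define h where "h x = real_of_ereal (min (g x) (ereal (c + 1)))" for x
  have h: "ereal (h x) = min (g x) (ereal (c + 1))" for x
    using bdd[of x] by (cases "g x") (auto simp: h_def min_def)
  have "lsc (\<lambda>x. ereal (h x))"
    unfolding h by (intro lsc_min lsc_const lsc)
  moreover have "bdd_below (range h)"
  proof (intro bdd_belowI[of _ a])
    have "ereal a \<le> ereal (h x)" for x
      unfolding h using bdd[of x] bdd[of x0] gx0 by simp
    then show "t \<in> range h \<Longrightarrow> a \<le> t" for t
      by auto
  qed
  ultimately obtain z where z_x0: "h z + \<alpha> * dist z x0 \<le> h x0"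
    and z_strict: "\<And>y. y \<noteq> z \<Longrightarrow> h z < h y + \<alpha> * dist y z"
    using ekeland_variational_principle \<open>\<alpha> > 0\<close> by blast
  have "h x0 = c"
    using h[of x0] gx0 by simp
  moreover have "0 \<le> \<alpha> * dist z x0"
    using \<open>\<alpha> > 0\<close> by simp
  ultimately have "h z \<le> c"
    using z_x0 by linarith
  then have gz: "g z = ereal (h z)"
    using h[of z] by (auto simp: min_def split: if_splits)
  show thesis
  proof
    show "g z + ereal (\<alpha> * dist z x0) \<le> ereal c"
      using z_x0 gz \<open>h x0 = c\<close> by simp
  next
    fix y
    have "0 \<le> \<alpha> * dist y z"
      using \<open>\<alpha> > 0\<close> by simp
    show "g z \<le> g y + ereal (\<alpha> * dist y z)"
    proof (cases "g y \<le> ereal (c + 1)")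
      case True
      then have "g y = ereal (h y)"
        using h[of y] by (simp add: min_def)
      moreover have "h z \<le> h y + \<alpha> * dist y z"
        using z_strict[of y] by (cases "y = z") auto
      ultimately show ?thesis
        using gz by simp
    next
      case False
      with \<open>h z \<le> c\<close> gz \<open>0 \<le> \<alpha> * dist y z\<close> show ?thesis
        by (cases "g y") auto
    qed
  qed
qed

lemma max_zero_divide_ereal: "d > 0 \<Longrightarrow> max 0 (ereal s) / ereal d = ereal (max 0 s / d)"
  by (cases "s \<le> 0") (auto simp: max_def zero_ereal_def)

lemma strong_slope_le:
  assumes "0 \<le> \<alpha>" and gz: "g z = ereal c"
    and below: "eventually (\<lambda>y. g z \<le> g y + ereal (\<alpha> * dist z y)) (at z)"
  shows "strong_slope g z \<le> ereal \<alpha>"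
  unfolding strong_slope_def
proof (rule Limsup_bounded)
  have "eventually (\<lambda>y. y \<noteq> z) (at z)"
    by (simp add: eventually_at_filter)
  with below show "eventually (\<lambda>y. max 0 (g z - g y) / ereal (dist z y) \<le> ereal \<alpha>) (at z)"
  proof eventually_elim
    case (elim y)
    then have d: "dist z y > 0"
      by simp
    show ?case
    proof (cases "g y")
      case (real s)
      with elim gz have "c - s \<le> \<alpha> * dist z y"
        by simp
      with d \<open>0 \<le> \<alpha>\<close> have "max 0 (c - s) / dist z y \<le> \<alpha>"
        by (simp add: field_simps)
      with real gz d show ?thesis
        by (simp add: max_zero_divide_ereal)
    qed (use elim gz \<open>0 \<le> \<alpha>\<close> in auto)
  qed
qed

lemma eventually_above_of_strong_slope_less:
  assumes "strong_slope g x < ereal t" and "0 < t" and gx: "g x = ereal c"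
  shows "eventually (\<lambda>y. ereal (c - t * dist x y) < g y) (at x)"
proof -
  have "eventually (\<lambda>y. max 0 (g x - g y) / ereal (dist x y) < ereal t) (at x)"
    using assms(1) Limsup_le_iff[THEN iffD1, OF order_refl] unfolding strong_slope_def by blast
  moreover have "eventually (\<lambda>y. y \<noteq> x) (at x)"
    by (simp add: eventually_at_filter)
  ultimately show ?thesis
  proof eventually_elim
    case (elim y)
    then have d: "dist x y > 0"
      by simp
    show ?case
    proof (cases "g y")
      case (real s)
      with elim gx d have "max 0 (c - s) / dist x y < t"
        by (simp add: max_zero_divide_ereal)
      with d have "c - s < t * dist x y"
        using mult_pos_pos[OF \<open>0 < t\<close> d] by (cases "c \<le> s") (auto simp: field_simps max_def)
      with real show ?thesis
        by simp
    qed (use elim gx d in auto)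
  qed
qed

lemma strong_slope_ge_of_edist_sublevel:
  assumes k: "k > 0" and gx: "g x = ereal c" and "\<rho> > 0"
    and bound: "\<And>a. c - \<rho> < a \<Longrightarrow> a < c \<Longrightarrow> edist x {y. g y \<le> ereal a} \<le> ereal (k * (c - a))"
  shows "ereal (1/k) \<le> strong_slope g x"
proof (rule ccontr)
  assume "\<not> ?thesis"
  then have "strong_slope g x < ereal (1/k)"
    by simp
  then obtain t0 where t0: "strong_slope g x < ereal t0" "t0 < 1/k"
    using ereal_dense2 by force
  define t where "t = max t0 (1 / (2*k))"
  have "strong_slope g x < ereal t"
    using t0(1) by (rule less_le_trans) (simp add: t_def)
  moreover have "0 < t" "t < 1/k"
    using t0(2) k by (auto simp: t_def field_simps less_max_iff_disj)
  ultimately have "eventually (\<lambda>y. ereal (c - t * dist x y) < g y) (at x)"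
    using eventually_above_of_strong_slope_less gx by blast
  then obtain \<delta> where "\<delta> > 0"
    and above: "\<And>y. y \<noteq> x \<Longrightarrow> dist y x < \<delta> \<Longrightarrow> ereal (c - t * dist x y) < g y"
    unfolding eventually_at by auto
  define m where "m = min (\<rho>/2) (t * \<delta> / 2)"
  have "m > 0" "m < \<rho>"
    using \<open>\<rho> > 0\<close> \<open>t > 0\<close> \<open>\<delta> > 0\<close> by (auto simp: m_def min_def)
  then have "edist x {y. g y \<le> ereal (c - m)} \<le> ereal (k * m)"
    using bound[of "c - m"] by simp
  also have "ereal (k * m) < ereal (m / t)"
    using \<open>t < 1/k\<close> \<open>t > 0\<close> \<open>m > 0\<close> k by (simp add: field_simps)
  finally obtain y where y: "g y \<le> ereal (c - m)" "dist x y < m / t"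
    by (auto simp: edist_less_ereal_iff)
  have "y \<noteq> x"
    using y(1) gx \<open>m > 0\<close> by auto
  moreover have "m / t \<le> \<delta> / 2"
    using \<open>t > 0\<close> by (simp add: m_def field_simps)
  then have "dist y x < \<delta>"
    using y(2) \<open>\<delta> > 0\<close> dist_commute[of x y] by linarith
  ultimately have "ereal (c - t * dist x y) < g y"
    by (rule above)
  then have "ereal (c - t * dist x y) < ereal (c - m)"
    using y(1) by (rule less_le_trans)
  then have "m < t * dist x y"
    by simp
  with y(2) \<open>t > 0\<close> show False
    by (simp add: field_simps)
qed

lemma strong_slope_small_above_sublevel:
  fixes g :: "'a::complete_space \<Rightarrow> ereal"
  assumes lsc: "lsc g" and gx0: "g x0 = ereal c" and "a < c" and "R > 0"
    and far: "ereal R < edist x0 {x. g x \<le> ereal a}"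
  obtains z where "ereal a < g z" "g z \<le> ereal c" "strong_slope g z \<le> ereal ((c - a) / R)"
proof -
  define \<alpha> where "\<alpha> = (c - a) / R"
  have "\<alpha> > 0"
    using \<open>a < c\<close> \<open>R > 0\<close> by (simp add: \<alpha>_def)
  define g' where "g' x = max (g x) (ereal a)" for x
  have "lsc g'"
    unfolding g'_def by (intro lsc_max lsc_const lsc)
  then obtain z where z_x0: "g' z + ereal (\<alpha> * dist z x0) \<le> ereal c"
    and z_min: "\<And>y. g' z \<le> g' y + ereal (\<alpha> * dist y z)"
    using ekeland_variational_principle_ereal[of g' a x0 c \<alpha>] \<open>\<alpha> > 0\<close> gx0 \<open>a < c\<close>
    by (auto simp: g'_def)
  have "ereal a + ereal (\<alpha> * dist z x0) \<le> g' z + ereal (\<alpha> * dist z x0)"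
    by (intro add_right_mono) (simp add: g'_def)
  also note z_x0
  finally have "(c - a) * dist z x0 \<le> (c - a) * R"
    using \<open>R > 0\<close> by (simp add: \<alpha>_def field_simps)
  then have "ereal (dist x0 z) \<le> ereal R"
    using \<open>a < c\<close> by (simp add: mult_le_cancel_left_pos dist_commute)
  have gz_a: "ereal a < g z"
  proof (rule ccontr)
    assume "\<not> ?thesis"
    then have "edist x0 {x. g x \<le> ereal a} \<le> ereal (dist x0 z)"
      by (intro edist_le_dist) simp
    also note \<open>ereal (dist x0 z) \<le> ereal R\<close>
    finally show False
      using far by simp
  qed
  then have gz: "g' z = g z"
    by (simp add: g'_def)
  have "g' z \<le> g' z + ereal (\<alpha> * dist z x0)"
    using \<open>\<alpha> > 0\<close> by (intro add_increasing2) simp_all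
  with z_x0 gz have "g z \<le> ereal c"
    by simp
  have "eventually (\<lambda>y. ereal a < g y) (nhds z)"
    using lsc gz_a by (simp add: lsc_def)
  then have "eventually (\<lambda>y. g z \<le> g y + ereal (\<alpha> * dist z y)) (nhds z)"
  proof (rule eventually_mono)
    fix y assume "ereal a < g y"
    with z_min[of y] gz show "g z \<le> g y + ereal (\<alpha> * dist z y)"
      by (simp add: g'_def dist_commute)
  qed
  moreover obtain c' where "g z = ereal c'"
    using gz_a \<open>g z \<le> ereal c\<close> by (cases "g z") auto
  ultimately have "strong_slope g z \<le> ereal \<alpha>"
    using \<open>\<alpha> > 0\<close> by (intro strong_slope_le) (auto simp: eventually_at_filter eventually_mono)
  with gz_a \<open>g z \<le> ereal c\<close> that show thesis
    by (simp add: \<alpha>_def)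
qed

lemma edist_sublevel_le_of_strong_slope:
  fixes g :: "'a::complete_space \<Rightarrow> ereal"
  assumes lsc: "lsc g" and k: "k > 0"
    and slope: "\<And>z. ereal a < g z \<Longrightarrow> g z < L \<Longrightarrow> ereal (1/k) \<le> strong_slope g z"
    and x0: "ereal a < g x0" "g x0 = ereal c" "g x0 < L"
  shows "edist x0 {x. g x \<le> ereal a} \<le> ereal (k * (c - a))"
proof (rule ccontr)
  assume "\<not> ?thesis"
  then obtain R where R: "ereal (k * (c - a)) < ereal R" "ereal R < edist x0 {x. g x \<le> ereal a}"
    using ereal_dense2 by (metis not_le)
  have "a < c"
    using x0 by simp
  then have "R > 0"
    using R(1) k mult_pos_pos[of k "c - a"] by (simp del: mult_pos_pos)
  obtain z where "ereal a < g z" "g z \<le> ereal c" and z_slope: "strong_slope g z \<le> ereal ((c - a) / R)"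
    using strong_slope_small_above_sublevel[OF lsc x0(2) \<open>a < c\<close> \<open>R > 0\<close> R(2)] .
  moreover have "g z < L"
    using \<open>g z \<le> ereal c\<close> x0(2,3) le_less_trans[of "g z" "ereal c" L] by simp
  ultimately have "ereal (1/k) \<le> strong_slope g z"
    using slope by blast
  with z_slope have "ereal (1/k) \<le> ereal ((c - a) / R)"
    by (rule order.trans[rotated])
  moreover have "(c - a) / R < 1/k"
    using R(1) \<open>R > 0\<close> k by (simp add: field_simps)
  ultimately show False
    by simp
qed

section \<open>Metric regularity, sublevel sets and slope\<close>

abbreviation epi_map :: "('a \<Rightarrow> ereal) \<Rightarrow> 'a \<Rightarrow> real set" where
  "epi_map g \<equiv> \<lambda>x. {y. g x \<le> ereal y}"

lemma inv_map_epi_map [simp]: "inv_map (epi_map g) y = {x. g x \<le> ereal y}"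
  by (simp add: inv_map_def)

lemma graph_epi_map [simp]: "(x, y) \<in> graph (epi_map g) \<longleftrightarrow> g x \<le> ereal y"
  by (simp add: graph_def)

text \<open>Assertions (ii) and (iii) for \<phi> = id on the band 0 < g < L; assertion (i) is metric regularity
  of epi_map g.\<close>

definition sublevels_hausdorff_lipschitz :: "real \<Rightarrow> ereal \<Rightarrow> ('a::metric_space \<Rightarrow> ereal) \<Rightarrow> bool" where
  "sublevels_hausdorff_lipschitz k L g \<longleftrightarrow> (\<forall>a b. 0 < a \<longrightarrow> ereal a < L \<longrightarrow> 0 < b \<longrightarrow> ereal b < L \<longrightarrow>
     hDist {x. g x \<le> ereal a} {x. g x \<le> ereal b} \<le> ereal (k * \<bar>a - b\<bar>))"

definition strong_slope_bounded_below :: "real \<Rightarrow> ereal \<Rightarrow> ('a::metric_space \<Rightarrow> ereal) \<Rightarrow> bool" where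
  "strong_slope_bounded_below k L g \<longleftrightarrow> (\<forall>x. 0 < g x \<and> g x < L \<longrightarrow> ereal (1/k) \<le> strong_slope g x)"

lemma edist_sublevel_le_of_hausdorff_lipschitz:
  assumes "sublevels_hausdorff_lipschitz k L g"
    and "0 < a" "ereal a < L" "0 < b" "ereal b < L" and "g x \<le> ereal b"
  shows "edist x {z. g z \<le> ereal a} \<le> ereal (k * \<bar>a - b\<bar>)"
proof -
  have "edist x {z. g z \<le> ereal a} \<le> hDist {z. g z \<le> ereal a} {z. g z \<le> ereal b}"
    using assms(6) by (intro edist_le_hDist) simp
  also have "\<dots> \<le> ereal (k * \<bar>a - b\<bar>)"
    using assms(1-5) unfolding sublevels_hausdorff_lipschitz_def by blast
  finally show ?thesis .
qed

lemma strong_slope_ge_of_metric_regular_at: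
  assumes k: "k > 0" and gx: "g x = ereal c" and reg: "metric_regular_at k (epi_map g) x c"
  shows "ereal (1/k) \<le> strong_slope g x"
proof -
  obtain \<epsilon> \<delta> where "\<epsilon> > 0" "\<delta> > 0" and reg_near: "\<And>x' a. x' \<in> ball x \<epsilon> \<Longrightarrow> a \<in> ball c \<delta> \<Longrightarrow>
      edist x' (inv_map (epi_map g) a) \<le> ereal k * edist a (epi_map g x')"
    using reg unfolding metric_regular_at_def by blast
  have bound: "edist x {z. g z \<le> ereal a} \<le> ereal k * edist a {s. g x \<le> ereal s}"
    if "a \<in> ball c \<delta>" for a
    using reg_near[OF _ that] \<open>\<epsilon> > 0\<close> by simp
  show ?thesis
  proof (rule strong_slope_ge_of_edist_sublevel[where g=g and x=x, OF k gx \<open>\<delta> > 0\<close>])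
    fix a assume a: "c - \<delta> < a" "a < c"
    have "edist x {z. g z \<le> ereal a} \<le> ereal k * edist a {s. g x \<le> ereal s}"
      using a by (intro bound) (simp add: dist_real_def)
    also have "\<dots> \<le> ereal k * ereal (c - a)"
    proof (rule ereal_mult_left_mono)
      have "edist a {s. g x \<le> ereal s} \<le> ereal (dist a c)"
        using gx by (intro edist_le_dist) simp
      then show "edist a {s. g x \<le> ereal s} \<le> ereal (c - a)"
        using a by (simp add: dist_real_def)
    qed (use k in simp)
    finally show "edist x {z. g z \<le> ereal a} \<le> ereal (k * (c - a))"
      by simp
  qed
qed

lemma strong_slope_bounded_below_of_metric_regular:
  assumes "k > 0"
    and "metric_regular_on k (epi_map g) ({x. 0 < g x \<and> g x < L} \<times> {y. 0 < y \<and> ereal y < L})"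
  shows "strong_slope_bounded_below k L g"
  unfolding strong_slope_bounded_below_def
proof (intro allI impI)
  fix x assume x: "0 < g x \<and> g x < L"
  then obtain c where c: "g x = ereal c"
    by (cases "g x") auto
  with x have "metric_regular_at k (epi_map g) x c"
    using assms(2) unfolding metric_regular_on_def by auto
  with assms(1) c show "ereal (1/k) \<le> strong_slope g x"
    by (rule strong_slope_ge_of_metric_regular_at)
qed

lemma strong_slope_bounded_below_of_hausdorff_lipschitz:
  assumes k: "k > 0" and H: "sublevels_hausdorff_lipschitz k L g"
  shows "strong_slope_bounded_below k L g"
  unfolding strong_slope_bounded_below_def
proof (intro allI impI)
  fix x assume x: "0 < g x \<and> g x < L"
  then obtain c where c: "g x = ereal c"
    by (cases "g x") auto
  with x have "c > 0" "ereal c < L"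
    by auto
  show "ereal (1/k) \<le> strong_slope g x"
  proof (rule strong_slope_ge_of_edist_sublevel[where g=g and x=x, OF k c \<open>c > 0\<close>])
    fix a assume a: "c - c < a" "a < c"
    then have "ereal a < L"
      using \<open>ereal c < L\<close> less_trans[of "ereal a" "ereal c" L] by simp
    with a \<open>c > 0\<close> \<open>ereal c < L\<close> c have "edist x {y. g y \<le> ereal a} \<le> ereal (k * \<bar>a - c\<bar>)"
      by (intro edist_sublevel_le_of_hausdorff_lipschitz[OF H]) auto
    with a show "edist x {y. g y \<le> ereal a} \<le> ereal (k * (c - a))"
      by simp
  qed
qed

lemma hDist_sublevels_le_of_strong_slope:
  fixes g :: "'a::complete_space \<Rightarrow> ereal"
  assumes lsc: "lsc g" and k: "k > 0" and slope: "strong_slope_bounded_below k L g"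
    and "0 < a" "a \<le> b" "ereal b < L"
  shows "hDist {x. g x \<le> ereal a} {x. g x \<le> ereal b} \<le> ereal (k * (b - a))"
proof (rule hDist_le)
  fix x assume "x \<in> {x. g x \<le> ereal a}"
  then have "x \<in> {x. g x \<le> ereal b}"
    using \<open>a \<le> b\<close> by (auto intro: order.trans)
  then show "edist x {x. g x \<le> ereal b} \<le> ereal (k * (b - a))"
    using k \<open>a \<le> b\<close> by (simp add: edist_eq_0)
next
  fix x assume x: "x \<in> {x. g x \<le> ereal b}"
  show "edist x {x. g x \<le> ereal a} \<le> ereal (k * (b - a))"
  proof (cases "g x \<le> ereal a")
    case True
    then show ?thesis
      using k \<open>a \<le> b\<close> by (simp add: edist_eq_0)
  next
    case False
    then obtain c where c: "g x = ereal c" "a < c" "c \<le> b"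
      using x by (cases "g x") auto
    then have "g x < L"
      using \<open>ereal b < L\<close> le_less_trans[of "g x" "ereal b" L] by simp
    have "edist x {x. g x \<le> ereal a} \<le> ereal (k * (c - a))"
    proof (rule edist_sublevel_le_of_strong_slope[OF lsc k])
      fix z assume "ereal a < g z" "g z < L"
      moreover have "0 < g z"
        using \<open>ereal a < g z\<close> \<open>0 < a\<close> less_trans[of 0 "ereal a" "g z"] by simp
      ultimately show "ereal (1/k) \<le> strong_slope g z"
        using slope unfolding strong_slope_bounded_below_def by blast
    qed (use c \<open>g x < L\<close> in auto)
    also have "\<dots> \<le> ereal (k * (b - a))"
      using c k by simp
    finally show ?thesis .
  qed
qed

lemma hausdorff_lipschitz_of_strong_slope:
  fixes g :: "'a::complete_space \<Rightarrow> ereal"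
  assumes "lsc g" and "k > 0" and "strong_slope_bounded_below k L g"
  shows "sublevels_hausdorff_lipschitz k L g"
  unfolding sublevels_hausdorff_lipschitz_def
proof (intro allI impI)
  fix a b :: real assume ab: "0 < a" "ereal a < L" "0 < b" "ereal b < L"
  show "hDist {x. g x \<le> ereal a} {x. g x \<le> ereal b} \<le> ereal (k * \<bar>a - b\<bar>)"
  proof (cases "a \<le> b")
    case True
    then show ?thesis
      using hDist_sublevels_le_of_strong_slope[OF assms ab(1) True ab(4)] by simp
  next
    case False
    then show ?thesis
      using hDist_sublevels_le_of_strong_slope[OF assms ab(3) _ ab(2)]
      by (simp add: hDist_commute)
  qed
qed

lemma edist_atLeast: "y \<le> b \<Longrightarrow> edist y {s. b \<le> s} = ereal (b - y)"
proof (rule antisym)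
  assume "y \<le> b"
  then show "edist y {s. b \<le> s} \<le> ereal (b - y)"
    using edist_le_dist[of b "{s. b \<le> s}" y] by (simp add: dist_real_def)
  show "ereal (b - y) \<le> edist y {s. b \<le> s}"
    unfolding edist_def by (rule INF_greatest) (simp add: dist_real_def)
qed

text \<open>Controls points x with g x = L, which lie outside the band, through a nearby point xb of the band.\<close>

lemma edist_sublevel_le_near:
  assumes H: "sublevels_hausdorff_lipschitz k L g" and k: "k > 0"
    and y: "0 < y" "ereal y < L" and xb: "g xb = ereal c" "0 < c" "ereal c < L"
    and near: "dist x xb \<le> k * (l - max c y)"
  shows "edist x {z. g z \<le> ereal y} \<le> ereal (k * (l - y))"
proof -
  have "edist xb {z. g z \<le> ereal y} \<le> ereal (k * max 0 (c - y))"
  proof (cases "c \<le> y")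
    case True
    with xb(1) show ?thesis
      by (simp add: edist_eq_0)
  next
    case False
    with edist_sublevel_le_of_hausdorff_lipschitz[OF H y \<open>0 < c\<close> \<open>ereal c < L\<close>] xb(1) show ?thesis
      by simp
  qed
  then have "ereal (dist x xb) + edist xb {z. g z \<le> ereal y} \<le> ereal (dist x xb) + ereal (k * max 0 (c - y))"
    by (rule add_left_mono)
  with edist_triangle[of x _ xb]
  have "edist x {z. g z \<le> ereal y} \<le> ereal (dist x xb) + ereal (k * max 0 (c - y))"
    by (rule order.trans)
  also have "\<dots> \<le> ereal (k * (l - y))"
  proof -
    have "k * (l - max c y) + k * max 0 (c - y) = k * (l - y)"
      by (simp add: algebra_simps max_def)
    with near show ?thesis
      by simp
  qed
  finally show ?thesis .
qed

lemma metric_regularity_inequality_of_hausdorff_lipschitz: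
  assumes H: "sublevels_hausdorff_lipschitz k L g" and k: "k > 0" and gL: "\<And>x. g x \<le> L"
    and y: "0 < y" "ereal y < L" and xb: "g xb = ereal c" "0 < c" "ereal c < L"
    and l: "L = \<infinity> \<or> L = ereal l" and near: "dist x xb \<le> k * (l - max c y)"
  shows "edist x {z. g z \<le> ereal y} \<le> ereal k * edist y {s. g x \<le> ereal s}"
proof (cases "g x \<le> ereal y")
  case True
  then show ?thesis
    using k edist_nonneg[of y "{s. g x \<le> ereal s}"] by (simp add: edist_eq_0)
next
  case False
  then consider "g x = \<infinity>" | b where "g x = ereal b" "y < b"
    by (cases "g x") auto
  then show ?thesis
  proof cases
    case 1
    then show ?thesis
      using k by (simp add: edist_empty)
  next
    case 2
    have "edist x {z. g z \<le> ereal y} \<le> ereal (k * (b - y))"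
    proof (cases "ereal b < L")
      case True
      have "edist x {z. g z \<le> ereal y} \<le> ereal (k * \<bar>y - b\<bar>)"
        using y 2 True by (intro edist_sublevel_le_of_hausdorff_lipschitz[OF H]) auto
      with 2(2) show ?thesis
        by simp
    next
      case False
      then have "L = ereal b"
        using gL[of x] 2(1) by (simp add: not_less antisym)
      with l have "l = b"
        by auto
      with edist_sublevel_le_near[OF H k y xb near] show ?thesis
        by simp
    qed
    also have "\<dots> = ereal k * edist y {s. g x \<le> ereal s}"
      using 2 by (simp add: edist_atLeast)
    finally show ?thesis .
  qed
qed

lemma metric_regular_of_hausdorff_lipschitz:
  assumes k: "k > 0" and gL: "\<And>x. g x \<le> L" and H: "sublevels_hausdorff_lipschitz k L g"
  shows "metric_regular_on k (epi_map g) ({x. 0 < g x \<and> g x < L} \<times> {y. 0 < y \<and> ereal y < L})"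
  unfolding metric_regular_on_def
proof clarify
  fix xb yb assume "(xb, yb) \<in> graph (epi_map g)" and xb: "0 < g xb" "g xb < L" and yb: "0 < yb" "ereal yb < L"
  then obtain c where c: "g xb = ereal c" "0 < c" "ereal c < L" "c \<le> yb"
    by (cases "g xb") auto
  obtain l where l: "max c yb < l" "L = \<infinity> \<or> L = ereal l"
  proof (cases L)
    case PInf
    then show ?thesis
      using that[of "max c yb + 1"] by simp
  qed (use c(3) yb(2) that in auto)
  define \<delta> where "\<delta> = min (yb / 2) ((l - yb) / 2)"
  define \<epsilon> where "\<epsilon> = k * (l - max c (yb + \<delta>))"
  have "\<delta> > 0" "yb + \<delta> < l"
    using l(1) yb(1) by (auto simp: \<delta>_def min_def field_simps)
  then have "\<epsilon> > 0"
    using l(1) k by (simp add: \<epsilon>_def)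
  have "edist x {z. g z \<le> ereal y} \<le> ereal k * edist y {s. g x \<le> ereal s}"
    if x: "dist x xb < \<epsilon>" and y: "\<bar>y - yb\<bar> < \<delta>" for x y
  proof (rule metric_regularity_inequality_of_hausdorff_lipschitz[OF H k gL _ _ c(1-3) l(2)])
    have "yb - \<delta> < y" "y < yb + \<delta>"
      using y by (simp_all add: abs_less_iff)
    then show "0 < y"
      by (simp add: \<delta>_def)
    show "ereal y < L"
      using l(2) \<open>y < yb + \<delta>\<close> \<open>yb + \<delta> < l\<close> by auto
    have "\<epsilon> \<le> k * (l - max c y)"
      using \<open>y < yb + \<delta>\<close> k by (simp add: \<epsilon>_def max_def)
    with x show "dist x xb \<le> k * (l - max c y)"
      by simp
  qed
  then have "\<forall>x\<in>ball xb \<epsilon>. \<forall>y\<in>ball yb \<delta>.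
      edist x (inv_map (epi_map g) y) \<le> ereal k * edist y (epi_map g x)"
    by (simp add: dist_commute dist_real_def)
  moreover have "(xb, yb) \<in> graph (epi_map g)"
    using c(1,4) by simp
  ultimately show "metric_regular_at k (epi_map g) xb yb"
    unfolding metric_regular_at_def using \<open>\<delta> > 0\<close> \<open>\<epsilon> > 0\<close> by blast
qed

theorem sublevel_regularity_equivalences:
  fixes g :: "'a::complete_space \<Rightarrow> ereal"
  assumes "lsc g" and "k > 0" and "\<And>x. g x \<le> L"
  shows "(metric_regular_on k (epi_map g) ({x. 0 < g x \<and> g x < L} \<times> {y. 0 < y \<and> ereal y < L})
           \<longleftrightarrow> sublevels_hausdorff_lipschitz k L g)
       \<and> (sublevels_hausdorff_lipschitz k L g \<longleftrightarrow> strong_slope_bounded_below k L g)"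
    (is "(?R \<longleftrightarrow> ?H) \<and> (?H \<longleftrightarrow> ?S)")
proof -
  have "?R \<Longrightarrow> ?S"
    by (rule strong_slope_bounded_below_of_metric_regular[OF assms(2)])
  moreover have "?S \<Longrightarrow> ?H"
    by (rule hausdorff_lipschitz_of_strong_slope[OF assms(1,2)])
  moreover have "?H \<Longrightarrow> ?S"
    by (rule strong_slope_bounded_below_of_hausdorff_lipschitz[OF assms(2)])
  moreover have "?H \<Longrightarrow> ?R"
    by (rule metric_regular_of_hausdorff_lipschitz[OF assms(2,3)])
  ultimately show ?thesis
    by blast
qed

section \<open>The class K and the composition with \<phi>\<close>

lemma classK_strict_mono_on:
  assumes "classK r0 \<phi>"
  shows "strict_mono_on {0..<r0} \<phi>"
proof (rule strict_mono_onI)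
  fix s t assume st: "s \<in> {0..<r0}" "t \<in> {0..<r0}" "s < t"
  from assms obtain \<phi>' where \<phi>': "\<And>r. r \<in> {0<..<r0} \<Longrightarrow> (\<phi> has_real_derivative \<phi>' r) (at r) \<and> \<phi>' r > 0"
    and cont: "continuous_on {0..<r0} \<phi>"
    unfolding classK_def by blast
  show "\<phi> s < \<phi> t"
  proof (rule DERIV_pos_imp_increasing_open[OF \<open>s < t\<close>])
    fix r assume "s < r" "r < t"
    then show "\<exists>y. DERIV \<phi> r :> y \<and> y > 0"
      using \<phi>'[of r] st by auto
  next
    show "continuous_on {s..t} \<phi>"
      using cont by (rule continuous_on_subset) (use st in auto)
  qed
qed

lemma classK_pos:
  assumes "classK r0 \<phi>" and "0 < t" "t < r0"
  shows "0 < \<phi> t"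
  using strict_mono_onD[OF classK_strict_mono_on[OF assms(1)], of 0 t] assms
  by (simp add: classK_def)

lemma phi_lim_eq_SUP:
  assumes K: "classK r0 \<phi>" and "r0 > 0"
  shows "phi_lim r0 \<phi> = (SUP t\<in>{0<..<r0}. ereal (\<phi> t))"
proof -
  define M where "M = (SUP t\<in>{0<..<r0}. ereal (\<phi> t))"
  have "((\<lambda>r. ereal (\<phi> r)) \<longlongrightarrow> M) (at_left r0)"
  proof (rule order_tendstoI)
    fix a assume "a < M"
    then obtain t where t: "t \<in> {0<..<r0}" "a < ereal (\<phi> t)"
      unfolding M_def by (auto simp: less_SUP_iff)
    then have "eventually (\<lambda>r. r \<in> {t<..<r0}) (at_left r0)"
      by (intro eventually_at_left_real) simp
    then show "eventually (\<lambda>r. a < ereal (\<phi> r)) (at_left r0)"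
    proof (rule eventually_mono)
      fix r assume "r \<in> {t<..<r0}"
      then have "\<phi> t < \<phi> r"
        using strict_mono_onD[OF classK_strict_mono_on[OF K]] t(1) by auto
      with t(2) show "a < ereal (\<phi> r)"
        by (simp add: order.strict_trans)
    qed
  next
    fix a assume "M < a"
    have "eventually (\<lambda>r. r \<in> {0<..<r0}) (at_left r0)"
      using \<open>r0 > 0\<close> by (rule eventually_at_left_real)
    then show "eventually (\<lambda>r. ereal (\<phi> r) < a) (at_left r0)"
    proof (rule eventually_mono)
      fix r assume "r \<in> {0<..<r0}"
      then have "ereal (\<phi> r) \<le> M"
        unfolding M_def by (rule SUP_upper)
      then show "ereal (\<phi> r) < a"
        using \<open>M < a\<close> by (rule le_less_trans)
    qed
  qed
  then show ?thesis
    unfolding phi_lim_def M_def by (intro tendsto_Lim) auto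
qed

lemma classK_less_phi_lim:
  assumes K: "classK r0 \<phi>" and "0 \<le> t" "t < r0"
  shows "ereal (\<phi> t) < phi_lim r0 \<phi>"
proof -
  have "r0 > 0"
    using assms(2,3) by simp
  define s where "s = (t + r0) / 2"
  have s: "s \<in> {0<..<r0}" "t < s"
    using assms(2,3) by (auto simp: s_def)
  then have "ereal (\<phi> t) < ereal (\<phi> s)"
    using strict_mono_onD[OF classK_strict_mono_on[OF K], of t s] assms(2,3) by simp
  also have "\<dots> \<le> phi_lim r0 \<phi>"
    unfolding phi_lim_eq_SUP[OF K \<open>r0 > 0\<close>] using s(1) by (auto intro: SUP_upper)
  finally show ?thesis .
qed

lemma classK_image:
  assumes K: "classK r0 \<phi>" and "r0 > 0"
  shows "\<phi> ` {0<..<r0} = {y. 0 < y \<and> ereal y < phi_lim r0 \<phi>}"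
proof (intro equalityI subsetI)
  fix y assume "y \<in> \<phi> ` {0<..<r0}"
  then show "y \<in> {y. 0 < y \<and> ereal y < phi_lim r0 \<phi>}"
    using classK_pos[OF K] classK_less_phi_lim[OF K] by auto
next
  fix y assume y: "y \<in> {y. 0 < y \<and> ereal y < phi_lim r0 \<phi>}"
  then obtain t where t: "t \<in> {0<..<r0}" "y < \<phi> t"
    unfolding phi_lim_eq_SUP[OF K \<open>r0 > 0\<close>] by (auto simp: less_SUP_iff)
  have "continuous_on {0..t} \<phi>"
    using K t(1) unfolding classK_def by (auto elim: continuous_on_subset)
  moreover have "\<phi> 0 \<le> y"
    using K y by (simp add: classK_def)
  ultimately obtain r where r: "0 \<le> r" "r \<le> t" "\<phi> r = y"
    using IVT'[of \<phi> 0 y t] t by auto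
  moreover have "r \<noteq> 0"
    using r(3) K y by (auto simp: classK_def)
  ultimately show "y \<in> \<phi> ` {0<..<r0}"
    using t(1) by force
qed

context
  fixes r0 :: real and \<phi> :: "real \<Rightarrow> real"
  assumes K: "classK r0 \<phi>" and r0: "r0 > 0"
begin

lemma phi_lim_pos: "0 < phi_lim r0 \<phi>"
  using classK_less_phi_lim[OF K order_refl r0] K by (simp add: classK_def zero_ereal_def)

lemma phi_comp_cases:
  obtains (nonpos) "f x \<le> 0" "phi_comp r0 \<phi> f x = 0"
    | (inner) t where "f x = ereal t" "0 < t" "t < r0" "phi_comp r0 \<phi> f x = ereal (\<phi> t)"
    | (top) "ereal r0 \<le> f x" "phi_comp r0 \<phi> f x = phi_lim r0 \<phi>"
proof (cases "f x \<le> 0")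
  case True
  then show ?thesis
    using nonpos K by (simp add: phi_comp_def classK_def zero_ereal_def)
next
  case False
  show ?thesis
  proof (cases "f x < ereal r0")
    case True
    with False obtain t where "f x = ereal t"
      by (cases "f x") auto
    then show ?thesis
      using inner[of t] False True by (simp add: phi_comp_def)
  next
    case False
    then show ?thesis
      using top \<open>\<not> f x \<le> 0\<close> by (simp add: phi_comp_def)
  qed
qed

lemma phi_comp_nonneg: "0 \<le> phi_comp r0 \<phi> f x"
  by (cases rule: phi_comp_cases[of f x]) (use classK_pos[OF K] phi_lim_pos in \<open>auto intro: less_imp_le\<close>)

lemma phi_comp_le_phi_lim: "phi_comp r0 \<phi> f x \<le> phi_lim r0 \<phi>"
  by (cases rule: phi_comp_cases[of f x]) (use classK_less_phi_lim[OF K] phi_lim_pos in \<open>auto intro: less_imp_le\<close>)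

lemma phi_comp_pos_iff: "0 < phi_comp r0 \<phi> f x \<longleftrightarrow> 0 < f x"
proof (cases rule: phi_comp_cases[of f x])
  case top
  then have "0 < f x"
    using r0 less_le_trans[of 0 "ereal r0" "f x"] by simp
  with top show ?thesis
    using phi_lim_pos by simp
qed (use classK_pos[OF K] in auto)

lemma phi_comp_less_phi_lim_iff: "phi_comp r0 \<phi> f x < phi_lim r0 \<phi> \<longleftrightarrow> f x < ereal r0"
proof (cases rule: phi_comp_cases[of f x])
  case nonpos
  then show ?thesis
    using r0 phi_lim_pos le_less_trans[of "f x" 0 "ereal r0"] by simp
qed (use classK_less_phi_lim[OF K] in auto)

lemma phi_comp_le_phi_iff:
  assumes "0 < r" "r < r0"
  shows "phi_comp r0 \<phi> f x \<le> ereal (\<phi> r) \<longleftrightarrow> f x \<le> ereal r"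
proof (cases rule: phi_comp_cases[of f x])
  case nonpos
  moreover have "0 < \<phi> r"
    using classK_pos[OF K] assms(1,2) by simp
  ultimately show ?thesis
    using assms(1) order.trans[of "f x" 0 "ereal r"] by simp
next
  case (inner t)
  then show ?thesis
    using strict_mono_on_less_eq[OF classK_strict_mono_on[OF K], of t r] assms(1,2) by simp
next
  case top
  then show ?thesis
    using assms(1,2) classK_less_phi_lim[OF K, of r] less_le_trans[of "ereal r" "ereal r0" "f x"]
    by auto
qed

lemma phi_comp_greaterE:
  assumes "0 \<le> c" and "c < phi_comp r0 \<phi> f x"
  obtains s where "0 < s" "s < r0" "ereal s < f x" "c < ereal (\<phi> s)"
proof (cases rule: phi_comp_cases[of f x])
  case nonpos
  with assms show ?thesis
    by simp
next
  case (inner t)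
  from K obtain \<phi>' where "(\<phi> has_real_derivative \<phi>' t) (at t)"
    using inner(2,3) unfolding classK_def by force
  then have "isCont \<phi> t"
    by (rule DERIV_isCont)
  moreover obtain c' where c': "c = ereal c'" "c' < \<phi> t"
    using assms inner(4) by (cases c) auto
  ultimately have "eventually (\<lambda>s. c' < \<phi> s) (at t)"
    by (simp add: isCont_def order_tendstoD)
  then obtain d where "d > 0" and d: "\<And>s. s \<noteq> t \<Longrightarrow> dist s t < d \<Longrightarrow> c' < \<phi> s"
    unfolding eventually_at by auto
  define s where "s = max (t / 2) (t - d / 2)"
  have "0 < s" "s < t"
    using inner(2) \<open>d > 0\<close> by (auto simp: s_def)
  moreover have "c' < \<phi> s"
    using \<open>s < t\<close> \<open>d > 0\<close> by (intro d) (auto simp: s_def dist_real_def)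
  ultimately show ?thesis
    using that inner(1,3) c'(1) by simp
next
  case top
  with assms obtain s where "s \<in> {0<..<r0}" "c < ereal (\<phi> s)"
    unfolding phi_lim_eq_SUP[OF K r0] by (auto simp: less_SUP_iff)
  moreover have "ereal s < f x"
    using top(1) \<open>s \<in> {0<..<r0}\<close> less_le_trans[of "ereal s" "ereal r0" "f x"] by simp
  ultimately show ?thesis
    using that by auto
qed

lemma lsc_phi_comp:
  assumes "lsc f"
  shows "lsc (phi_comp r0 \<phi> f)"
  unfolding lsc_def
proof (intro allI impI)
  fix x c assume c: "c < phi_comp r0 \<phi> f x"
  show "eventually (\<lambda>y. c < phi_comp r0 \<phi> f y) (nhds x)"
  proof (cases "c < 0")
    case True
    then show ?thesis
      using phi_comp_nonneg[of f] less_le_trans[of c 0] by (intro always_eventually) blast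
  next
    case False
    then obtain s where s: "0 < s" "s < r0" "ereal s < f x" "c < ereal (\<phi> s)"
      using phi_comp_greaterE c by (metis not_le)
    have "eventually (\<lambda>y. ereal s < f y) (nhds x)"
      using assms s(3) by (simp add: lsc_def)
    then show ?thesis
    proof (rule eventually_mono)
      fix y assume "ereal s < f y"
      then have "ereal (\<phi> s) < phi_comp r0 \<phi> f y"
        using phi_comp_le_phi_iff[OF s(1,2), of f y] by (simp add: not_le[symmetric])
      with s(4) show "c < phi_comp r0 \<phi> f y"
        by (rule less_trans)
    qed
  qed
qed

lemma phi_comp_band_eq:
  "{x. 0 < phi_comp r0 \<phi> f x \<and> phi_comp r0 \<phi> f x < phi_lim r0 \<phi>} = {x. 0 < f x \<and> f x < ereal r0}"
  by (simp add: phi_comp_pos_iff phi_comp_less_phi_lim_iff)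

lemma sublevels_hausdorff_lipschitz_phi_comp_iff:
  "sublevels_hausdorff_lipschitz k (phi_lim r0 \<phi>) (phi_comp r0 \<phi> f) \<longleftrightarrow>
     (\<forall>r1\<in>{0<..<r0}. \<forall>r2\<in>{0<..<r0}.
        hDist {x. f x \<le> ereal r1} {x. f x \<le> ereal r2} \<le> ereal (k * \<bar>\<phi> r1 - \<phi> r2\<bar>))"
proof -
  have sublevel: "{x. phi_comp r0 \<phi> f x \<le> ereal (\<phi> r)} = {x. f x \<le> ereal r}" if "r \<in> {0<..<r0}" for r
    using phi_comp_le_phi_iff[of r f] that by auto
  have "sublevels_hausdorff_lipschitz k (phi_lim r0 \<phi>) (phi_comp r0 \<phi> f) \<longleftrightarrow>
      (\<forall>a\<in>\<phi> ` {0<..<r0}. \<forall>b\<in>\<phi> ` {0<..<r0}. hDist {x. phi_comp r0 \<phi> f x \<le> ereal a}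
         {x. phi_comp r0 \<phi> f x \<le> ereal b} \<le> ereal (k * \<bar>a - b\<bar>))"
    unfolding sublevels_hausdorff_lipschitz_def classK_image[OF K r0] by blast
  also have "\<dots> \<longleftrightarrow> (\<forall>r1\<in>{0<..<r0}. \<forall>r2\<in>{0<..<r0}.
        hDist {x. f x \<le> ereal r1} {x. f x \<le> ereal r2} \<le> ereal (k * \<bar>\<phi> r1 - \<phi> r2\<bar>))"
    by (simp add: sublevel)
  finally show ?thesis .
qed

end

theorem corollary2p4:
  fixes f :: "'a::complete_space \<Rightarrow> ereal" and \<phi> :: "real \<Rightarrow> real" and r0 k :: real
  assumes "\<forall>x. f x \<noteq> -\<infinity>"
    and "lsc f"
    and "r0 > 0" and "k > 0"
    and "classK r0 \<phi>"
  shows "(metric_regular_on k (\<lambda>x. {y::real. phi_comp r0 \<phi> f x \<le> ereal y})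
             ({x. 0 < f x \<and> f x < ereal r0} \<times> {y. 0 < y \<and> ereal y < phi_lim r0 \<phi>})
          \<longleftrightarrow> (\<forall>r1\<in>{0<..<r0}. \<forall>r2\<in>{0<..<r0}.
                 hDist {x. f x \<le> ereal r1} {x. f x \<le> ereal r2} \<le> ereal (k * \<bar>\<phi> r1 - \<phi> r2\<bar>)))
       \<and> ((\<forall>r1\<in>{0<..<r0}. \<forall>r2\<in>{0<..<r0}.
                 hDist {x. f x \<le> ereal r1} {x. f x \<le> ereal r2} \<le> ereal (k * \<bar>\<phi> r1 - \<phi> r2\<bar>))
          \<longleftrightarrow> (\<forall>x. 0 < f x \<and> f x < ereal r0 \<longrightarrow> strong_slope (phi_comp r0 \<phi> f) x \<ge> ereal (1 / k)))"
proof -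
  note K = \<open>classK r0 \<phi>\<close> and r0 = \<open>r0 > 0\<close>
  have "lsc (phi_comp r0 \<phi> f)"
    using lsc_phi_comp[OF K r0 \<open>lsc f\<close>] .
  moreover have "\<And>x. phi_comp r0 \<phi> f x \<le> phi_lim r0 \<phi>"
    by (rule phi_comp_le_phi_lim[OF K r0])
  ultimately have "(metric_regular_on k (epi_map (phi_comp r0 \<phi> f))
        ({x. 0 < phi_comp r0 \<phi> f x \<and> phi_comp r0 \<phi> f x < phi_lim r0 \<phi>} \<times>
         {y. 0 < y \<and> ereal y < phi_lim r0 \<phi>})
      \<longleftrightarrow> sublevels_hausdorff_lipschitz k (phi_lim r0 \<phi>) (phi_comp r0 \<phi> f))
    \<and> (sublevels_hausdorff_lipschitz k (phi_lim r0 \<phi>) (phi_comp r0 \<phi> f)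
      \<longleftrightarrow> strong_slope_bounded_below k (phi_lim r0 \<phi>) (phi_comp r0 \<phi> f))"
    using sublevel_regularity_equivalences \<open>k > 0\<close> by blast
  then show ?thesis
    unfolding phi_comp_band_eq[OF K r0] sublevels_hausdorff_lipschitz_phi_comp_iff[OF K r0]
      strong_slope_bounded_below_def
    by (simp add: phi_comp_pos_iff[OF K r0] phi_comp_less_phi_lim_iff[OF K r0])
qed

end
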